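(* Let $(X_t, t>0)$ be a real-valued process and let $0<a\le 1$, $b_2\ge b_1\ge 0$ be constants. Assume there is $t_0>1$ such that for every $p>1$ there exists a constant $c_p>0$ with $$\|X_t\|_p\le c_p\,t^a(\log t)^{b_1}\quad\forall t>t_0,$$ $$\|X_t-X_s\|_p\le c_p\,(t-s)^a(\log t)^{b_2}\quad\text{for } t_0\le s\le t-1,$$ $$\Big\|\sup_{t\le u\le t+1}|X_u-X_t|\Big\|_p\le c_p\,t^{a/2}\quad\forall t>t_0.$$ Then for every $\epsilon>0$, $X_t=o\big(t^a(\log t)^{b_1+\epsilon}\big)$ almost surely as $t\to\infty$.
   Context: $\|\xi\|_p=(\mathbb{E}|\xi|^p)^{1/p}$ denotes the $L^p$-norm of a random variable $\xi$. *)

theory Defs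
  imports "HOL-Probability.Probability"
begin

definition epow :: "ennreal \<Rightarrow> real \<Rightarrow> ennreal" where
  "epow x r = (if x = \<infinity> then \<infinity> else ennreal (enn2real x powr r))"

definition Lp_norm_enn :: "'a measure \<Rightarrow> real \<Rightarrow> ('a \<Rightarrow> ennreal) \<Rightarrow> ennreal" where
  "Lp_norm_enn M p f = epow (\<integral>\<^sup>+ \<omega>. epow (f \<omega>) p \<partial>M) (1 / p)"

definition Lp_norm :: "'a measure \<Rightarrow> real \<Rightarrow> ('a \<Rightarrow> real) \<Rightarrow> ennreal" where
  "Lp_norm M p \<xi> = Lp_norm_enn M p (\<lambda>\<omega>. ennreal \<bar>\<xi> \<omega>\<bar>)"

end

theory Submission
  imports Defs "HOL-Real_Asymp.Real_Asymp"
begin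

(* Chaining over dyadic blocks.  Inside [2^m, 2^(m+1)) take a coarse grid of 2^L ~ m^K equally
   spaced points and, below it, the dyadic increments of length 2^l with l < m - L.  Markov's
   inequality for a large moment p makes it unlikely that some grid point exceeds
   2^(ma) m^(b1+\<delta>) (moment bound for X) or that some increment exceeds 2^(ma)/m (increment
   bound; level l contributes 2^((m-l)(1-ap)), which is tiny because m - l > L).  Suitable K and p
   make both probabilities O(m^-2), so by Borel-Cantelli almost surely all late blocks are good,
   and chaining gives |X_j| = O(j^a (log j)^(b1+\<delta>)) at the integers, for every \<delta> > 0.  The
   oscillation bound with p = 4/a and Borel-Cantelli bound X between consecutive integers by j^a,
   and taking \<delta> = \<epsilon>/2 turns the O-bound into an o-bound. *)

section \<open>Markov inequality and Borel--Cantelli\<close>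

lemma epow_measurable [measurable]: "(\<lambda>x. epow x r) \<in> borel_measurable borel"
  unfolding epow_def by measurable

lemma nn_integral_epow_le_of_Lp_norm_enn_le:
  assumes p: "0 < p" and B: "0 \<le> B" and norm_le: "Lp_norm_enn M p f \<le> ennreal B"
  shows "(\<integral>\<^sup>+ \<omega>. epow (f \<omega>) p \<partial>M) \<le> ennreal (B powr p)"
proof -
  let ?I = "\<integral>\<^sup>+ \<omega>. epow (f \<omega>) p \<partial>M"
  have I_finite: "?I \<noteq> \<infinity>"
    using norm_le by (auto simp: Lp_norm_enn_def epow_def top_unique)
  then have "enn2real ?I powr (1 / p) \<le> B"
    using norm_le B unfolding Lp_norm_enn_def epow_def by simp
  then have "(enn2real ?I powr (1 / p)) powr p \<le> B powr p"
    using p by (intro powr_mono2) auto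
  then have "ennreal (enn2real ?I) \<le> ennreal (B powr p)"
    using p by (intro ennreal_leI) (simp add: powr_powr)
  with I_finite show ?thesis
    by (simp add: ennreal_enn2real_if)
qed

lemma one_le_scaled_epow:
  assumes p: "0 < p" and d: "0 < d" and "ennreal d < x"
  shows "1 \<le> ennreal (1 / d powr p) * epow x p"
proof (cases x rule: ennreal_cases)
  case (real y)
  with assms have "d powr p \<le> y powr p"
    by (intro powr_mono2) (auto simp: ennreal_less_iff)
  then have "1 \<le> (1 / d powr p) * y powr p"
    using d by (simp add: field_simps)
  then show ?thesis
    using real d by (simp add: epow_def ennreal_mult[symmetric])
qed (use d in \<open>simp add: epow_def ennreal_mult_top\<close>)

lemma Lp_norm_enn_Markov:
  assumes [measurable]: "f \<in> borel_measurable M"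
    and p: "0 < p" and d: "0 < d" and B: "0 \<le> B" and norm_le: "Lp_norm_enn M p f \<le> ennreal B"
  shows "measure M {\<omega>\<in>space M. ennreal d < f \<omega>} \<le> (B / d) powr p"
proof -
  have "emeasure M {\<omega>\<in>space M. ennreal d < f \<omega>} = (\<integral>\<^sup>+ \<omega>. indicator {\<omega>\<in>space M. ennreal d < f \<omega>} \<omega> \<partial>M)"
    by (intro nn_integral_indicator[symmetric]) measurable
  also have "\<dots> \<le> (\<integral>\<^sup>+ \<omega>. ennreal (1 / d powr p) * epow (f \<omega>) p \<partial>M)"
    using one_le_scaled_epow[OF p d] by (intro nn_integral_mono) (simp add: indicator_def)
  also have "\<dots> = ennreal (1 / d powr p) * (\<integral>\<^sup>+ \<omega>. epow (f \<omega>) p \<partial>M)"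
    by (simp add: nn_integral_cmult)
  also have "\<dots> \<le> ennreal (1 / d powr p) * ennreal (B powr p)"
    using nn_integral_epow_le_of_Lp_norm_enn_le[OF p B norm_le] by (rule mult_left_mono) simp
  also have "\<dots> = ennreal ((B / d) powr p)"
    using d B by (simp add: ennreal_mult[symmetric] powr_divide)
  finally show ?thesis
    by (simp add: measure_def enn2real_leI)
qed

lemma Lp_norm_Markov:
  assumes "\<xi> \<in> borel_measurable M" "0 < p" "0 < d" "0 \<le> B" "Lp_norm M p \<xi> \<le> ennreal B"
  shows "measure M {\<omega>\<in>space M. d < \<bar>\<xi> \<omega>\<bar>} \<le> (B / d) powr p"
proof -
  have "{\<omega>\<in>space M. d < \<bar>\<xi> \<omega>\<bar>} = {\<omega>\<in>space M. ennreal d < ennreal \<bar>\<xi> \<omega>\<bar>}"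
    using \<open>0 < d\<close> by (auto simp: ennreal_less_iff)
  then show ?thesis
    using assms by (simp add: Lp_norm_def Lp_norm_enn_Markov)
qed

lemma exceedance_in_sets:
  fixes f :: "'a \<Rightarrow> real"
  assumes [measurable]: "f \<in> borel_measurable M"
  shows "{\<omega>\<in>space M. d < \<bar>f \<omega>\<bar>} \<in> sets M"
  by measurable

lemma measure_UN_le_card_mult:
  fixes b :: real
  assumes "finite I" "\<And>i. i \<in> I \<Longrightarrow> A i \<in> sets M" "\<And>i. i \<in> I \<Longrightarrow> measure M (A i) \<le> b"
  shows "measure M (\<Union>i\<in>I. A i) \<le> card I * b"
proof -
  have "measure M (\<Union>i\<in>I. A i) \<le> (\<Sum>i\<in>I. measure M (A i))"
    using assms by (intro measure_UNION_le)
  also have "\<dots> \<le> card I * b"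
    using assms(3) by (rule sum_bounded_above)
  finally show ?thesis .
qed

lemma (in prob_space) AE_eventually_notin_if_summable_bound:
  assumes "eventually (\<lambda>n. A n \<in> events \<and> prob (A n) \<le> b n) sequentially" and "summable b"
  shows "AE \<omega> in M. eventually (\<lambda>n. \<omega> \<notin> A n) sequentially"
proof -
  obtain N where N: "\<And>n. n \<ge> N \<Longrightarrow> A n \<in> events \<and> prob (A n) \<le> b n"
    using assms(1) by (auto simp: eventually_sequentially)
  define A' where "A' n = (if N \<le> n then A n else {})" for n
  have "summable (\<lambda>n. prob (A' n))"
    using assms(2) by (rule summable_comparison_test'[where N = N]) (simp add: A'_def N)
  then have "AE \<omega> in M. eventually (\<lambda>n. \<omega> \<in> space M - A' n) sequentially"
    by (intro borel_cantelli_AE1) (auto simp: A'_def N less_top[symmetric])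
  then show ?thesis
  proof (rule AE_mp[OF _ AE_I2], intro impI)
    fix \<omega> assume "eventually (\<lambda>n. \<omega> \<in> space M - A' n) sequentially"
    then show "eventually (\<lambda>n. \<omega> \<notin> A n) sequentially"
      using eventually_ge_at_top[of N] by eventually_elim (simp add: A'_def)
  qed
qed

lemma (in prob_space) AE_eventually_le_of_Lp_norm_enn_bound:
  fixes Z :: "nat \<Rightarrow> 'a \<Rightarrow> ennreal"
  assumes a: "0 < a" and pa: "2 < p * a" and c: "0 \<le> c"
    and bound: "eventually (\<lambda>j. Z j \<in> borel_measurable M \<and>
      Lp_norm_enn M p (Z j) \<le> ennreal (c * real j powr (a / 2))) sequentially"
  shows "AE \<omega> in M. eventually (\<lambda>j. Z j \<omega> \<le> ennreal (real j powr a)) sequentially"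
proof -
  have p: "0 < p"
    using mult_nonpos_nonneg[of p a] a pa by force
  define F where "F j = {\<omega>\<in>space M. ennreal (real j powr a) < Z j \<omega>}" for j
  have "AE \<omega> in M. eventually (\<lambda>j. \<omega> \<notin> F j) sequentially"
  proof (rule AE_eventually_notin_if_summable_bound)
    show "eventually (\<lambda>j. F j \<in> events \<and> prob (F j) \<le> c powr p * real j powr (- (p * a / 2))) sequentially"
      using bound eventually_gt_at_top[of 0]
    proof eventually_elim
      case (elim j)
      then have [measurable]: "Z j \<in> borel_measurable M"
        by simp
      have "prob (F j) \<le> (c * real j powr (a / 2) / real j powr a) powr p"
        unfolding F_def using elim p c by (intro Lp_norm_enn_Markov) auto
      also have "c * real j powr (a / 2) / real j powr a = c * real j powr (- (a / 2))"
        using powr_diff[of "real j" "a / 2" a] by simp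
      also have "(c * real j powr (- (a / 2))) powr p = c powr p * real j powr (- (p * a / 2))"
        using c by (simp add: powr_mult powr_powr mult.commute)
      finally show ?case
        unfolding F_def by simp
    qed
    show "summable (\<lambda>j. c powr p * real j powr (- (p * a / 2)))"
      using pa by (intro summable_mult) (simp add: summable_real_powr_iff)
  qed
  then show ?thesis
    by (rule AE_mp[OF _ AE_I2]) (auto simp: F_def not_less elim!: eventually_mono)
qed

section \<open>Dyadic chaining\<close>

lemma dyadic_chain_bound:
  fixes f :: "nat \<Rightarrow> real" and d :: "nat \<Rightarrow> real"
  assumes "\<And>l i. l < r \<Longrightarrow> i < 2^(r-l) \<Longrightarrow> \<bar>f ((i+1) * 2^l) - f (i * 2^l)\<bar> \<le> d l"
    and "j < 2^r"
  shows "\<bar>f j - f 0\<bar> \<le> (\<Sum>l<r. d l)"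
  using assms
proof (induction r arbitrary: f j)
  case 0
  then show ?case by simp
next
  case (Suc r)
  have top_step: "\<bar>f (2^r) - f 0\<bar> \<le> d r"
    using Suc.prems(1)[of r 0] by simp
  show ?case
  proof (cases "j < 2^r")
    case True
    have "\<bar>f ((i+1) * 2^l) - f (i * 2^l)\<bar> \<le> d l" if "l < r" "i < 2^(r-l)" for l i
    proof -
      have "(2::nat)^(r-l) \<le> 2^(Suc r - l)"
        by (intro power_increasing) auto
      with that(2) have "i < 2^(Suc r - l)"
        by (rule less_le_trans)
      then show ?thesis
        using that(1) Suc.prems(1)[of l i] by simp
    qed
    from Suc.IH[OF this True] top_step show ?thesis by simp
  next
    case False
    have "\<bar>f (2^r + (i+1) * 2^l) - f (2^r + i * 2^l)\<bar> \<le> d l" if l: "l < r" and i: "i < 2^(r-l)" for l i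
    proof -
      have "(2::nat)^r = 2^(r-l) * 2^l" and "(2::nat)^(Suc r - l) = 2 * 2^(r-l)"
        using l by (simp_all add: power_add[symmetric] Suc_diff_le)
      then show ?thesis
        using i l Suc.prems(1)[of l "i + 2^(r-l)"] by (simp add: algebra_simps)
    qed
    moreover have "j - 2^r < 2^r"
      using Suc.prems(2) False by simp
    ultimately have "\<bar>f (2^r + (j - 2^r)) - f (2^r + 0)\<bar> \<le> (\<Sum>l<r. d l)"
      by (rule Suc.IH[where f = "\<lambda>x. f (2^r + x)"])
    then show ?thesis
      using False top_step by simp
  qed
qed

lemma dyadic_block_bound:
  fixes Y :: "nat \<Rightarrow> real"
  assumes L: "L \<le> m" and j: "2^m \<le> j" "j < 2^(m+1)"
    and coarse: "\<And>q. q < 2^L \<Longrightarrow> \<bar>Y (2^m + q * 2^(m-L))\<bar> \<le> T"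
    and fine: "\<And>l i. l < m - L \<Longrightarrow> i < 2^(m-l) \<Longrightarrow> \<bar>Y (2^m + (i+1) * 2^l) - Y (2^m + i * 2^l)\<bar> \<le> D"
  shows "\<bar>Y j\<bar> \<le> T + real (m - L) * D"
proof -
  define r where "r = m - L"
  define q where "q = (j - 2^m) div 2^r"
  define g where "g = 2^m + q * 2^r"
  have m_split: "(2::nat)^m = 2^L * 2^r"
    using L by (simp add: r_def power_add[symmetric])
  then have "j - 2^m < 2^L * 2^r"
    using j by simp
  then have q: "q < 2^L"
    by (simp add: q_def less_mult_imp_div_less)
  have j_eq: "j = g + (j - 2^m) mod 2^r"
    using j(1) div_mult_mod_eq[of "j - 2^m" "2^r"] unfolding g_def q_def by linarith
  have "\<bar>Y (g + (i+1) * 2^l) - Y (g + i * 2^l)\<bar> \<le> D" if l: "l < r" and i: "i < 2^(r-l)" for l i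
  proof -
    define i' where "i' = q * 2^(r-l) + i"
    have r_split: "(2::nat)^r = 2^(r-l) * 2^l" and ml_split: "(2::nat)^(m-l) = 2^L * 2^(r-l)"
      using l L by (simp_all add: r_def power_add[symmetric])
    have "i' < (q + 1) * 2^(r-l)"
      using i by (simp add: i'_def)
    also have "\<dots> \<le> 2^L * 2^(r-l)"
      using q by (intro mult_right_mono) auto
    finally have "i' < 2^(m-l)"
      using ml_split by simp
    moreover have "g + (i+1) * 2^l = 2^m + (i'+1) * 2^l" "g + i * 2^l = 2^m + i' * 2^l"
      unfolding g_def i'_def r_split by (simp_all add: algebra_simps)
    ultimately show ?thesis
      using fine[of l i'] l by (simp only: r_def)
  qed
  then have "\<bar>Y (g + (j - 2^m) mod 2^r) - Y (g + 0)\<bar> \<le> (\<Sum>l<r. D)"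
    by (intro dyadic_chain_bound[where f = "\<lambda>x. Y (g + x)"]) auto
  moreover have "\<bar>Y g\<bar> \<le> T"
    using coarse q by (simp add: g_def r_def)
  ultimately show ?thesis
    using j_eq by (simp add: r_def)
qed

lemma eventually_floor_log:
  assumes "eventually P sequentially"
  shows "eventually (\<lambda>j. P (floor_log j)) sequentially"
proof -
  obtain N where N: "\<And>n. n \<ge> N \<Longrightarrow> P n"
    using assms by (auto simp: eventually_sequentially)
  have "P (floor_log j)" if "j \<ge> 2^N" for j
    using N floor_log_le_iff[OF that] by simp
  then show ?thesis
    by (auto simp: eventually_sequentially)
qed

lemma ln_le_of_le_two_power:
  assumes "1 \<le> n" "n \<le> (2::nat)^(m+1)"
  shows "ln (real n) \<le> real m + 1"
proof -
  have "ln (real n) \<le> ln (2 ^ (m+1))"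
    using assms by (subst ln_le_cancel_iff) (auto simp del: power_Suc)
  also have "\<dots> = (real m + 1) * ln 2"
    using ln_realpow[of 2 "m+1"] by simp
  also have "\<dots> \<le> real m + 1"
    using ln_2_less_1 by (simp add: mult_left_le)
  finally show ?thesis .
qed

section \<open>Growth at integer times\<close>

locale dyadic_moment_bounds = prob_space M for M :: "'w measure" +
  fixes Y :: "nat \<Rightarrow> 'w \<Rightarrow> real" and N0 :: nat and a b1 b2 p c :: real
  assumes a_pos: "0 < a" and b1_nonneg: "0 \<le> b1" and b2_nonneg: "0 \<le> b2"
    and p_pos: "0 < p" and c_pos: "0 < c"
    and measurable_Y: "\<And>n. N0 \<le> n \<Longrightarrow> Y n \<in> borel_measurable M"
    and moment_bound: "\<And>n. N0 \<le> n \<Longrightarrow>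
      Lp_norm M p (Y n) \<le> ennreal (c * real n powr a * ln (real n) powr b1)"
    and increment_moment_bound: "\<And>i j. N0 \<le> i \<Longrightarrow> i < j \<Longrightarrow>
      Lp_norm M p (\<lambda>\<omega>. Y j \<omega> - Y i \<omega>) \<le> ennreal (c * (real j - real i) powr a * ln (real j) powr b2)"
begin

definition coarse_exceedance :: "real \<Rightarrow> nat \<Rightarrow> nat \<Rightarrow> 'w set" where
  "coarse_exceedance T L m = (\<Union>q<2^L. {\<omega>\<in>space M. T < \<bar>Y (2^m + q * 2^(m-L)) \<omega>\<bar>})"

definition increment_exceedance :: "real \<Rightarrow> nat \<Rightarrow> nat \<Rightarrow> 'w set" where
  "increment_exceedance D l m =
    (\<Union>i<2^(m-l). {\<omega>\<in>space M. D < \<bar>Y (2^m + (i+1) * 2^l) \<omega> - Y (2^m + i * 2^l) \<omega>\<bar>})"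

lemma coarse_exceedance_in_events: "N0 \<le> 2^m \<Longrightarrow> coarse_exceedance T L m \<in> events"
  unfolding coarse_exceedance_def by (intro sets.finite_UN ballI exceedance_in_sets measurable_Y) auto

lemma increment_exceedance_in_events: "N0 \<le> 2^m \<Longrightarrow> increment_exceedance D l m \<in> events"
  unfolding increment_exceedance_def
  by (intro sets.finite_UN ballI exceedance_in_sets borel_measurable_diff measurable_Y) auto

lemma prob_exceedance_le:
  assumes "N0 \<le> n" "0 < T"
  shows "prob {\<omega>\<in>space M. T < \<bar>Y n \<omega>\<bar>} \<le> (c * real n powr a * ln (real n) powr b1 / T) powr p"
  using assms c_pos p_pos by (intro Lp_norm_Markov measurable_Y moment_bound) auto

lemma prob_increment_exceedance_le:
  assumes "N0 \<le> i" "i < j" "0 < D"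
  shows "prob {\<omega>\<in>space M. D < \<bar>Y j \<omega> - Y i \<omega>\<bar>}
    \<le> (c * (real j - real i) powr a * ln (real j) powr b2 / D) powr p"
  using assms c_pos p_pos
  by (intro Lp_norm_Markov borel_measurable_diff measurable_Y increment_moment_bound) auto

end

(* The exponents make both exceedance probabilities of a block O(m^-2): eps_p balances the m^K
   coarse grid points against the Markov factor m^(-\<epsilon> p), and K_large makes the increment levels
   below the grid sum to O(m^-2). *)
locale dyadic_chaining = dyadic_moment_bounds M Y N0 a b1 b2 p c
  for M :: "'w measure" and Y :: "nat \<Rightarrow> 'w \<Rightarrow> real" and N0 :: nat and a b1 b2 p c :: real +
  fixes \<epsilon> :: real and K :: nat
  assumes eps_pos: "0 < \<epsilon>" and eps_p: "\<epsilon> * p = real K + 2" and ap_ge_1: "1 \<le> a * p"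
    and K_large: "(b2 + 1) * p + 3 \<le> K * (a * p - 1)"
begin

definition grid_level :: "nat \<Rightarrow> nat" where
  "grid_level m = floor_log (m ^ K)"

definition coarse_threshold :: "nat \<Rightarrow> real" where
  "coarse_threshold m = (2^(m+1)) powr a * (real m + 1) powr b1 * real m powr \<epsilon>"

definition increment_threshold :: "nat \<Rightarrow> real" where
  "increment_threshold m = (2^m) powr a / real m"

definition increment_scale :: "nat \<Rightarrow> real" where
  "increment_scale m = c * 2 powr b2 * real m powr (1 + b2)"

definition block_exceedance :: "nat \<Rightarrow> 'w set" where
  "block_exceedance m = coarse_exceedance (coarse_threshold m) (grid_level m) m \<union>
     (\<Union>l<m - grid_level m. increment_exceedance (increment_threshold m) l m)"

lemma grid_level_bounds:
  assumes "0 < m"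
  shows "(2::real) ^ grid_level m \<le> real m ^ K" "real m ^ K < 2 * 2 ^ grid_level m"
proof -
  have "0 < m ^ K"
    using assms by simp
  then have "2 ^ grid_level m \<le> m ^ K" "m ^ K < 2 * 2 ^ grid_level m"
    unfolding grid_level_def by (simp_all add: floor_log_exp2_le floor_log_exp2_gt)
  then have "real (2 ^ grid_level m) \<le> real (m ^ K)" "real (m ^ K) < real (2 * 2 ^ grid_level m)"
    by (simp_all only: of_nat_le_iff of_nat_less_iff)
  then show "(2::real) ^ grid_level m \<le> real m ^ K" "real m ^ K < 2 * 2 ^ grid_level m"
    by simp_all
qed

lemma eventually_grid_level_le: "eventually (\<lambda>m. grid_level m \<le> m) sequentially"
proof -
  have "eventually (\<lambda>m::nat. real m ^ K < 2 ^ m) sequentially"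
    by real_asymp
  then show ?thesis
  proof eventually_elim
    case (elim m)
    then have "real (m ^ K) < real (2 ^ m)"
      by simp
    then have "m ^ K \<le> 2 ^ m"
      by (simp only: of_nat_less_iff)
    then have "floor_log (m ^ K) \<le> floor_log (2 ^ m)"
      by (rule floor_log_le_iff)
    then show ?case
      by (simp add: grid_level_def)
  qed
qed

lemma prob_coarse_point_exceedance:
  assumes m: "1 \<le> m" "N0 \<le> 2^m" and n: "2^m \<le> n" "n \<le> 2^(m+1)"
  shows "prob {\<omega>\<in>space M. coarse_threshold m < \<bar>Y n \<omega>\<bar>} \<le> (c / real m powr \<epsilon>) powr p"
proof -
  have T_pos: "0 < coarse_threshold m"
    using m by (simp add: coarse_threshold_def)
  have "(2::nat) \<le> 2^m"
    using power_increasing[of 1 m "2::nat"] m by simp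
  then have n2: "2 \<le> real n"
    using n by linarith
  have "real n \<le> real (2^(m+1))"
    using n(2) by (simp only: of_nat_le_iff)
  then have "real n powr a \<le> (2^(m+1)) powr a"
    using n2 a_pos by (intro powr_mono2) auto
  moreover have "ln (real n) powr b1 \<le> (real m + 1) powr b1"
    using n n2 b1_nonneg ln_le_of_le_two_power[of n m] by (intro powr_mono2) auto
  ultimately have "c * real n powr a * ln (real n) powr b1 \<le> c * (2^(m+1)) powr a * (real m + 1) powr b1"
    using c_pos by (simp add: mult.assoc mult_mono)
  also have "\<dots> = c / real m powr \<epsilon> * coarse_threshold m"
    using m by (simp add: coarse_threshold_def)
  finally have "c * real n powr a * ln (real n) powr b1 / coarse_threshold m \<le> c / real m powr \<epsilon>"
    using T_pos by (simp add: divide_le_eq)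
  then have "(c * real n powr a * ln (real n) powr b1 / coarse_threshold m) powr p \<le> (c / real m powr \<epsilon>) powr p"
    using T_pos c_pos p_pos by (intro powr_mono2) auto
  moreover have "N0 \<le> n"
    using m n by linarith
  ultimately show ?thesis
    using prob_exceedance_le[OF _ T_pos] by (meson order.trans)
qed

lemma prob_coarse_part:
  assumes m: "1 \<le> m" "N0 \<le> 2^m" "grid_level m \<le> m"
  shows "prob (coarse_exceedance (coarse_threshold m) (grid_level m) m) \<le> c powr p * real m powr -2"
proof -
  let ?L = "grid_level m"
  have "prob (coarse_exceedance (coarse_threshold m) ?L m) \<le> real (card {..<(2::nat)^?L}) * (c / real m powr \<epsilon>) powr p"
    unfolding coarse_exceedance_def
  proof (rule measure_UN_le_card_mult)
    fix q :: nat assume "q \<in> {..<2^?L}"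
    then have "q * 2^(m - ?L) < 2^?L * 2^(m - ?L)"
      by simp
    also have "\<dots> = 2^m"
      using m by (simp flip: power_add)
    finally show "prob {\<omega>\<in>space M. coarse_threshold m < \<bar>Y (2^m + q * 2^(m - ?L)) \<omega>\<bar>} \<le> (c / real m powr \<epsilon>) powr p"
      using m by (intro prob_coarse_point_exceedance) auto
  qed (use m in \<open>auto intro!: exceedance_in_sets measurable_Y\<close>)
  also have "\<dots> = 2^?L * (c powr p * real m powr (- (real K + 2)))"
  proof -
    have "(c / real m powr \<epsilon>) powr p = c powr p / real m powr (real K + 2)"
      using c_pos by (simp add: powr_divide powr_powr eps_p)
    then show ?thesis
      by (simp only: powr_minus divide_inverse card_lessThan of_nat_power of_nat_numeral)
  qed
  also have "\<dots> \<le> real m ^ K * (c powr p * real m powr (- (real K + 2)))"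
    using grid_level_bounds m by (intro mult_right_mono) auto
  also have "\<dots> = c powr p * real m powr -2"
    using m by (simp add: powr_realpow[symmetric] powr_add[symmetric])
  finally show ?thesis .
qed

lemma increment_moment_le_scaled_threshold:
  assumes m: "1 \<le> m" and l: "l \<le> m" and t: "2 \<le> t" "t \<le> 2^(m+1)"
  shows "c * 2 powr (real l * a) * ln (real t) powr b2
    \<le> increment_scale m / 2 powr (real (m - l) * a) * increment_threshold m"
proof -
  have "ln (real t) \<le> 2 * real m"
    using ln_le_of_le_two_power[of t m] t m by simp
  then have "ln (real t) powr b2 \<le> 2 powr b2 * real m powr b2"
    using t b2_nonneg by (simp add: powr_mult[symmetric] powr_mono2)
  then have "c * 2 powr (real l * a) * ln (real t) powr b2 \<le> c * 2 powr (real l * a) * (2 powr b2 * real m powr b2)"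
    using c_pos by (simp add: mult_left_mono)
  also have "\<dots> = increment_scale m / 2 powr (real (m - l) * a) * increment_threshold m"
  proof -
    have "2 powr (a * real l) * 2 powr (a * real (m - l)) = 2 powr (a * real m)"
      using l by (simp add: powr_add[symmetric] of_nat_diff algebra_simps)
    moreover have "real m powr (1 + b2) = real m * real m powr b2"
      using m by (simp add: powr_add)
    ultimately show ?thesis
      using m by (simp add: increment_scale_def increment_threshold_def powr_diff powr_realpow[symmetric]
          powr_powr field_simps)
  qed
  finally show ?thesis .
qed

lemma prob_increment_point_exceedance:
  assumes m: "1 \<le> m" "N0 \<le> 2^m" and l: "l \<le> m" and i: "i < 2^(m-l)"
  shows "prob {\<omega>\<in>space M. increment_threshold m < \<bar>Y (2^m + (i+1) * 2^l) \<omega> - Y (2^m + i * 2^l) \<omega>\<bar>}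
    \<le> (increment_scale m / 2 powr (real (m - l) * a)) powr p"
proof -
  define s where "s = 2^m + i * 2^l"
  define t where "t = 2^m + (i+1) * 2^l"
  have "(i+1) * 2^l \<le> (2::nat)^(m-l) * 2^l"
    using i by (intro mult_right_mono) auto
  also have "\<dots> = 2^m"
    using l by (simp flip: power_add)
  finally have t_le: "t \<le> 2^(m+1)"
    by (simp add: t_def)
  have "(2::nat) \<le> 2^m"
    using power_increasing[of 1 m "2::nat"] m by simp
  then have t_ge: "2 \<le> t"
    by (simp add: t_def)
  have D_pos: "0 < increment_threshold m"
    using m by (simp add: increment_threshold_def)
  have "real t - real s = 2^l"
    by (simp add: s_def t_def algebra_simps)
  then have "c * (real t - real s) powr a * ln (real t) powr b2
      \<le> increment_scale m / 2 powr (real (m - l) * a) * increment_threshold m"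
    using increment_moment_le_scaled_threshold[OF m(1) l t_ge t_le]
    by (simp add: powr_realpow[symmetric] powr_powr)
  then have "c * (real t - real s) powr a * ln (real t) powr b2 / increment_threshold m
      \<le> increment_scale m / 2 powr (real (m - l) * a)"
    using D_pos by (simp add: divide_le_eq)
  then have "(c * (real t - real s) powr a * ln (real t) powr b2 / increment_threshold m) powr p
      \<le> (increment_scale m / 2 powr (real (m - l) * a)) powr p"
    using D_pos c_pos p_pos by (intro powr_mono2) auto
  moreover have "N0 \<le> s" "s < t"
    using m by (simp_all add: s_def t_def)
  ultimately have "prob {\<omega>\<in>space M. increment_threshold m < \<bar>Y t \<omega> - Y s \<omega>\<bar>}
      \<le> (increment_scale m / 2 powr (real (m - l) * a)) powr p"
    using prob_increment_exceedance_le[of s t, OF _ _ D_pos] by linarith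
  then show ?thesis
    by (simp only: s_def t_def)
qed

lemma prob_increment_level:
  assumes m: "1 \<le> m" "N0 \<le> 2^m" and l: "l < m - grid_level m"
  shows "prob (increment_exceedance (increment_threshold m) l m)
    \<le> increment_scale m powr p * real m powr (real K * (1 - a * p))"
proof -
  let ?L = "grid_level m"
  have scale_pos: "0 < increment_scale m"
    using c_pos m by (simp add: increment_scale_def)
  have "prob (increment_exceedance (increment_threshold m) l m)
      \<le> real (card {..<(2::nat)^(m-l)}) * (increment_scale m / 2 powr (real (m - l) * a)) powr p"
    unfolding increment_exceedance_def
    by (rule measure_UN_le_card_mult)
      (use prob_increment_point_exceedance l m in \<open>auto intro!: exceedance_in_sets borel_measurable_diff measurable_Y\<close>)
  also have "\<dots> = increment_scale m powr p * 2 powr (real (m - l) * (1 - a * p))"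
    using scale_pos
    by (simp add: powr_divide powr_powr powr_realpow[symmetric] powr_diff right_diff_distrib mult.assoc)
  also have "\<dots> \<le> increment_scale m powr p * real m powr (real K * (1 - a * p))"
  proof (rule mult_left_mono)
    have "2 powr (real (m - l) * (1 - a * p)) \<le> 2 powr (real (?L + 1) * (1 - a * p))"
      using l ap_ge_1 by (intro powr_mono mult_right_mono_neg) auto
    also have "\<dots> = (2 * 2 ^ ?L) powr (1 - a * p)"
      by (simp add: powr_powr[symmetric] powr_realpow[symmetric] powr_add)
    also have "\<dots> \<le> (real m ^ K) powr (1 - a * p)"
      using grid_level_bounds(2)[of m] m ap_ge_1 by (intro powr_mono2') auto
    also have "\<dots> = real m powr (real K * (1 - a * p))"
      using m by (simp add: powr_realpow[symmetric] powr_powr)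
    finally show "2 powr (real (m - l) * (1 - a * p)) \<le> real m powr (real K * (1 - a * p))" .
  qed simp
  finally show ?thesis .
qed

lemma prob_increment_part:
  assumes m: "1 \<le> m" "N0 \<le> 2^m" "grid_level m \<le> m"
  shows "prob (\<Union>l<m - grid_level m. increment_exceedance (increment_threshold m) l m)
    \<le> c powr p * 2 powr (b2 * p) * real m powr -2"
proof -
  let ?L = "grid_level m"
  have "prob (\<Union>l<m - ?L. increment_exceedance (increment_threshold m) l m)
      \<le> real (card {..<m - ?L}) * (increment_scale m powr p * real m powr (real K * (1 - a * p)))"
    by (rule measure_UN_le_card_mult)
      (use prob_increment_level m in \<open>auto intro: increment_exceedance_in_events\<close>)
  also have "\<dots> \<le> real m * (increment_scale m powr p * real m powr (real K * (1 - a * p)))"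
    by (intro mult_right_mono) auto
  also have "\<dots> = c powr p * 2 powr (b2 * p) * real m powr (1 + (1 + b2) * p + real K * (1 - a * p))"
    using m c_pos by (simp add: increment_scale_def powr_mult powr_powr powr_add ring_distribs mult_ac)
  also have "\<dots> \<le> c powr p * 2 powr (b2 * p) * real m powr -2"
  proof -
    have "1 + (1 + b2) * p + real K * (1 - a * p) \<le> -2"
      using K_large by (simp add: algebra_simps)
    then show ?thesis
      using m by (intro mult_left_mono powr_mono) auto
  qed
  finally show ?thesis .
qed

lemma block_exceedance_in_events: "N0 \<le> 2^m \<Longrightarrow> block_exceedance m \<in> events"
  unfolding block_exceedance_def
  by (intro sets.Un sets.finite_UN ballI coarse_exceedance_in_events increment_exceedance_in_events) auto

lemma prob_block_exceedance:
  assumes "1 \<le> m" "N0 \<le> 2^m" "grid_level m \<le> m"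
  shows "prob (block_exceedance m) \<le> c powr p * (1 + 2 powr (b2 * p)) * real m powr -2"
proof -
  have "prob (block_exceedance m) \<le> prob (coarse_exceedance (coarse_threshold m) (grid_level m) m)
      + prob (\<Union>l<m - grid_level m. increment_exceedance (increment_threshold m) l m)"
    unfolding block_exceedance_def using assms
    by (intro measure_Un_le sets.finite_UN ballI coarse_exceedance_in_events increment_exceedance_in_events) auto
  also have "\<dots> \<le> c powr p * real m powr -2 + c powr p * 2 powr (b2 * p) * real m powr -2"
    using assms by (intro add_mono prob_coarse_part prob_increment_part)
  finally show ?thesis
    by (simp add: algebra_simps)
qed

lemma coarse_threshold_plus_le:
  assumes m: "1 \<le> m" and j: "2^m \<le> j"
  shows "coarse_threshold m + (2^m) powr a
    \<le> (2 powr a + 1) * 3 powr (b1 + \<epsilon>) * real j powr a * ln (real j) powr (b1 + \<epsilon>)"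
proof -
  have j_ge: "(2::real)^m \<le> real j"
    using j by (simp flip: of_nat_le_iff)
  moreover have "0 < real j"
    using j_ge by (metis less_le_trans zero_less_numeral zero_less_power)
  ultimately have "ln (2 ^ m) \<le> ln (real j)"
    by (subst ln_le_cancel_iff) auto
  then have "real m * ln 2 \<le> ln (real j)"
    by (simp add: ln_realpow)
  moreover have "real m * (2/3) \<le> real m * ln 2"
    using ln2_ge_two_thirds by (intro mult_left_mono) auto
  ultimately have m_le: "real m + 1 \<le> 3 * ln (real j)"
    using m by linarith
  let ?\<Lambda> = "(3 * ln (real j)) powr (b1 + \<epsilon>)"
  have one_le: "1 \<le> ?\<Lambda>"
    using m_le m b1_nonneg eps_pos by (intro ge_one_powr_ge_zero) auto
  have pow_a: "(2^m) powr a \<le> real j powr a"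
    using j_ge a_pos by (intro powr_mono2) auto
  have "(real m + 1) powr b1 * real m powr \<epsilon> \<le> (3 * ln (real j)) powr b1 * (3 * ln (real j)) powr \<epsilon>"
    using m_le m b1_nonneg eps_pos by (intro mult_mono powr_mono2) auto
  then have "(real m + 1) powr b1 * real m powr \<epsilon> \<le> ?\<Lambda>"
    by (simp add: powr_add)
  moreover have "(2^(m+1)) powr a = 2 powr a * (2^m) powr a"
    by (simp add: powr_mult[symmetric])
  ultimately have "coarse_threshold m \<le> 2 powr a * real j powr a * ?\<Lambda>"
    unfolding coarse_threshold_def using pow_a by (simp add: mult.assoc mult_mono)
  moreover have "(2^m) powr a \<le> real j powr a * ?\<Lambda>"
    using pow_a one_le mult_left_mono[OF one_le, of "real j powr a"] by simp
  moreover have "?\<Lambda> = 3 powr (b1 + \<epsilon>) * ln (real j) powr (b1 + \<epsilon>)"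
    using m_le by (simp add: powr_mult)
  ultimately show ?thesis
    by (simp add: algebra_simps)
qed

lemma abs_le_outside_block_exceedance:
  assumes "\<omega> \<in> space M" "\<omega> \<notin> block_exceedance m" "grid_level m \<le> m" "2^m \<le> j" "j < 2^(m+1)"
  shows "\<bar>Y j \<omega>\<bar> \<le> coarse_threshold m + (2^m) powr a"
proof -
  have "\<bar>Y j \<omega>\<bar> \<le> coarse_threshold m + real (m - grid_level m) * increment_threshold m"
    by (rule dyadic_block_bound[where Y = "\<lambda>n. Y n \<omega>"])
      (use assms in \<open>auto simp: block_exceedance_def coarse_exceedance_def increment_exceedance_def not_less\<close>)
  moreover have "real (m - grid_level m) * increment_threshold m \<le> real m * ((2^m) powr a / real m)"
    unfolding increment_threshold_def by (intro mult_right_mono) auto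
  moreover have "real m * ((2^m) powr a / real m) \<le> (2^m) powr a"
    by (cases "m = 0") auto
  ultimately show ?thesis
    by linarith
qed

lemma AE_eventually_growth_bound:
  "AE \<omega> in M. eventually (\<lambda>j. \<bar>Y j \<omega>\<bar>
     \<le> (2 powr a + 1) * 3 powr (b1 + \<epsilon>) * real j powr a * ln (real j) powr (b1 + \<epsilon>)) sequentially"
proof -
  have "eventually (\<lambda>m. N0 \<le> 2^m) sequentially"
    using eventually_ge_at_top[of N0] by eventually_elim (meson less_exp less_imp_le order.trans)
  then have large: "eventually (\<lambda>m. 1 \<le> m \<and> N0 \<le> 2^m \<and> grid_level m \<le> m) sequentially"
    by (intro eventually_conj eventually_ge_at_top eventually_grid_level_le)
  have "AE \<omega> in M. eventually (\<lambda>m. \<omega> \<notin> block_exceedance m) sequentially"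
  proof (rule AE_eventually_notin_if_summable_bound)
    show "eventually (\<lambda>m. block_exceedance m \<in> events \<and>
        prob (block_exceedance m) \<le> c powr p * (1 + 2 powr (b2 * p)) * real m powr -2) sequentially"
      using large by eventually_elim (simp add: block_exceedance_in_events prob_block_exceedance)
    show "summable (\<lambda>m. c powr p * (1 + 2 powr (b2 * p)) * real m powr -2)"
      by (intro summable_mult) (simp add: summable_real_powr_iff)
  qed
  then show ?thesis
  proof (rule AE_mp[OF _ AE_I2], intro impI)
    fix \<omega> assume \<omega>: "\<omega> \<in> space M" and ev: "eventually (\<lambda>m. \<omega> \<notin> block_exceedance m) sequentially"
    from large ev have "eventually (\<lambda>m. 1 \<le> m \<and> grid_level m \<le> m \<and> \<omega> \<notin> block_exceedance m) sequentially"
      by eventually_elim simp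
    then have "eventually (\<lambda>j. 1 \<le> floor_log j \<and> grid_level (floor_log j) \<le> floor_log j \<and>
        \<omega> \<notin> block_exceedance (floor_log j)) sequentially"
      by (rule eventually_floor_log)
    then show "eventually (\<lambda>j. \<bar>Y j \<omega>\<bar>
        \<le> (2 powr a + 1) * 3 powr (b1 + \<epsilon>) * real j powr a * ln (real j) powr (b1 + \<epsilon>)) sequentially"
      using eventually_gt_at_top[of 0]
    proof eventually_elim
      case (elim j)
      have "2 ^ floor_log j \<le> j" "j < 2 ^ (floor_log j + 1)"
        using elim(2) floor_log_exp2_le floor_log_exp2_gt by auto
      then show ?case
        using elim(1) abs_le_outside_block_exceedance[OF \<omega>] coarse_threshold_plus_le by (meson order.trans)
    qed
  qed
qed

end

lemma dyadic_chaining_exponents_exist: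
  fixes a b2 \<epsilon> :: real
  assumes "0 < a" "0 \<le> b2" "0 < \<epsilon>"
  shows "\<exists>(K::nat) p. 1 < p \<and> \<epsilon> * p = real K + 2 \<and> 1 \<le> a * p \<and> (b2 + 1) * p + 3 \<le> K * (a * p - 1)"
proof -
  have "eventually (\<lambda>K::nat. 1 < (real K + 2) / \<epsilon> \<and> 1 \<le> a * ((real K + 2) / \<epsilon>) \<and>
      (b2 + 1) * ((real K + 2) / \<epsilon>) + 3 \<le> K * (a * ((real K + 2) / \<epsilon>) - 1)) sequentially"
    using assms by (intro eventually_conj) real_asymp+
  then obtain K :: nat where "1 < (real K + 2) / \<epsilon>" "1 \<le> a * ((real K + 2) / \<epsilon>)"
    "(b2 + 1) * ((real K + 2) / \<epsilon>) + 3 \<le> K * (a * ((real K + 2) / \<epsilon>) - 1)"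
    unfolding eventually_sequentially by blast
  moreover have "\<epsilon> * ((real K + 2) / \<epsilon>) = real K + 2"
    using assms by simp
  ultimately show ?thesis
    by blast
qed

lemma AE_eventually_growth_at_integers:
  fixes M :: "'w measure" and X :: "real \<Rightarrow> 'w \<Rightarrow> real"
  assumes "prob_space M" "0 < a" "0 \<le> b1" "0 \<le> b2" "0 < \<epsilon>"
    and measurable: "\<And>t. t > \<tau> \<Longrightarrow> X t \<in> borel_measurable M"
    and moments: "\<And>p. 1 < p \<Longrightarrow> \<exists>c>0. (\<forall>t>\<tau>. Lp_norm M p (X t) \<le> ennreal (c * t powr a * ln t powr b1)) \<and>
      (\<forall>s t. \<tau> \<le> s \<and> s \<le> t - 1 \<longrightarrow>
        Lp_norm M p (\<lambda>\<omega>. X t \<omega> - X s \<omega>) \<le> ennreal (c * (t - s) powr a * ln t powr b2))"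
  shows "AE \<omega> in M. eventually (\<lambda>j. \<bar>X (real j) \<omega>\<bar>
    \<le> (2 powr a + 1) * 3 powr (b1 + \<epsilon>) * real j powr a * ln (real j) powr (b1 + \<epsilon>)) sequentially"
proof -
  obtain K p where p: "1 < p" "\<epsilon> * p = real K + 2" "1 \<le> a * p" "(b2 + 1) * p + 3 \<le> K * (a * p - 1)"
    using dyadic_chaining_exponents_exist[OF \<open>0 < a\<close> \<open>0 \<le> b2\<close> \<open>0 < \<epsilon>\<close>] by blast
  then obtain c where c: "0 < c"
    and moment: "\<And>t. t > \<tau> \<Longrightarrow> Lp_norm M p (X t) \<le> ennreal (c * t powr a * ln t powr b1)"
    and increment: "\<And>s t. \<tau> \<le> s \<Longrightarrow> s \<le> t - 1 \<Longrightarrow>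
      Lp_norm M p (\<lambda>\<omega>. X t \<omega> - X s \<omega>) \<le> ennreal (c * (t - s) powr a * ln t powr b2)"
    using moments[OF \<open>1 < p\<close>] by blast
  define N0 where "N0 = nat \<lceil>\<tau>\<rceil> + 1"
  have N0: "\<tau> < real n" if "N0 \<le> n" for n
    using that real_nat_ceiling_ge[of \<tau>] by (simp add: N0_def)
  interpret dyadic_chaining M "\<lambda>n. X (real n)" N0 a b1 b2 p c \<epsilon> K
  proof (intro dyadic_chaining.intro dyadic_moment_bounds.intro dyadic_chaining_axioms.intro
      dyadic_moment_bounds_axioms.intro)
    fix i j :: nat assume "N0 \<le> i" "i < j"
    with N0[of i] show "Lp_norm M p (\<lambda>\<omega>. X (real j) \<omega> - X (real i) \<omega>)
        \<le> ennreal (c * (real j - real i) powr a * ln (real j) powr b2)"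
      by (intro increment) auto
  qed (use assms p c N0 in \<open>auto intro: measurable moment\<close>)
  show ?thesis
    by (rule AE_eventually_growth_bound)
qed

section \<open>Between integer times\<close>

lemma (in prob_space) AE_eventually_unit_oscillation_le:
  fixes X :: "real \<Rightarrow> 'a \<Rightarrow> real"
  assumes a: "0 < a" "a \<le> 1"
    and measurable: "\<And>t. t > \<tau> \<Longrightarrow> (\<lambda>\<omega>. SUP u\<in>{t..t+1}. ennreal \<bar>X u \<omega> - X t \<omega>\<bar>) \<in> borel_measurable M"
    and moments: "\<And>p. 1 < p \<Longrightarrow> \<exists>c>0. \<forall>t>\<tau>.
      Lp_norm_enn M p (\<lambda>\<omega>. SUP u\<in>{t..t+1}. ennreal \<bar>X u \<omega> - X t \<omega>\<bar>) \<le> ennreal (c * t powr (a / 2))"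
  shows "AE \<omega> in M. eventually (\<lambda>j.
    \<forall>u\<in>{real j..real j + 1}. \<bar>X u \<omega> - X (real j) \<omega>\<bar> \<le> real j powr a) sequentially"
proof -
  have "1 < 4 / a"
    using a by (simp add: field_simps)
  then obtain c where "0 < c" and moment: "\<And>t. t > \<tau> \<Longrightarrow>
      Lp_norm_enn M (4 / a) (\<lambda>\<omega>. SUP u\<in>{t..t+1}. ennreal \<bar>X u \<omega> - X t \<omega>\<bar>) \<le> ennreal (c * t powr (a / 2))"
    using moments by blast
  have "eventually (\<lambda>j::nat. \<tau> < real j) sequentially"
    by real_asymp
  then have "AE \<omega> in M. eventually (\<lambda>j.
      (SUP u\<in>{real j..real j + 1}. ennreal \<bar>X u \<omega> - X (real j) \<omega>\<bar>) \<le> ennreal (real j powr a)) sequentially"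
    using a \<open>0 < c\<close>
    by (intro AE_eventually_le_of_Lp_norm_enn_bound[where p = "4 / a" and c = c])
      (auto elim!: eventually_mono intro: measurable moment)
  then show ?thesis
    by eventually_elim (auto elim!: eventually_mono simp: SUP_le_iff)
qed

lemma eventually_at_top_of_unit_intervals:
  assumes "eventually (\<lambda>j. \<forall>u\<in>{real j..real j + 1}. P u) sequentially"
  shows "eventually P at_top"
proof -
  obtain J where J: "\<And>j u. J \<le> j \<Longrightarrow> u \<in> {real j..real j + 1} \<Longrightarrow> P u"
    using assms unfolding eventually_sequentially by blast
  show ?thesis
  proof (rule eventually_at_top_linorderI[of "real J"])
    fix t assume "real J \<le> t"
    then have "J \<le> nat \<lfloor>t\<rfloor>" and "t \<in> {real (nat \<lfloor>t\<rfloor>)..real (nat \<lfloor>t\<rfloor>) + 1}"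
      by (auto simp: le_nat_floor)
    then show "P t"
      by (rule J)
  qed
qed

lemma abs_le_of_integer_bound_and_increment:
  fixes f :: "real \<Rightarrow> real"
  assumes "0 \<le> a" "0 \<le> b" and ln_j: "1 \<le> ln (real j)"
    and f_j: "\<bar>f (real j)\<bar> \<le> C * real j powr a * ln (real j) powr b"
    and increment: "\<bar>f u - f (real j)\<bar> \<le> real j powr a" and u: "real j \<le> u"
  shows "\<bar>f u\<bar> \<le> (\<bar>C\<bar> + 1) * (u powr a * ln u powr b)"
proof -
  have "1 \<le> ln (real j) powr b"
    using ln_j \<open>0 \<le> b\<close> by (intro ge_one_powr_ge_zero) auto
  then have "real j powr a \<le> real j powr a * ln (real j) powr b"
    using mult_left_mono[of 1 "ln (real j) powr b" "real j powr a"] by simp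
  moreover have "C * real j powr a * ln (real j) powr b \<le> \<bar>C\<bar> * (real j powr a * ln (real j) powr b)"
    by (simp add: mult.assoc mult_right_mono)
  ultimately have f_u: "\<bar>f u\<bar> \<le> (\<bar>C\<bar> + 1) * (real j powr a * ln (real j) powr b)"
    using f_j increment by (simp add: algebra_simps)
  have "real j > 0"
    using ln_j by (cases j) auto
  then have "real j powr a * ln (real j) powr b \<le> u powr a * ln u powr b"
    using u ln_j \<open>0 \<le> a\<close> \<open>0 \<le> b\<close> by (intro mult_mono powr_mono2) auto
  then have "(\<bar>C\<bar> + 1) * (real j powr a * ln (real j) powr b) \<le> (\<bar>C\<bar> + 1) * (u powr a * ln u powr b)"
    by (intro mult_left_mono) auto
  with f_u show ?thesis
    by linarith
qed

lemma smallo_of_integer_bound_and_oscillation: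
  fixes f :: "real \<Rightarrow> real"
  assumes "0 \<le> a" "0 \<le> b" "b < b'"
    and integers: "eventually (\<lambda>j. \<bar>f (real j)\<bar> \<le> C * real j powr a * ln (real j) powr b) sequentially"
    and oscillation: "eventually (\<lambda>j. \<forall>u\<in>{real j..real j + 1}. \<bar>f u - f (real j)\<bar> \<le> real j powr a) sequentially"
  shows "f \<in> o(\<lambda>t. t powr a * ln t powr b')"
proof -
  have "eventually (\<lambda>j::nat. 1 \<le> ln (real j)) sequentially"
    by real_asymp
  then have "eventually (\<lambda>j. \<forall>u\<in>{real j..real j + 1}. \<bar>f u\<bar> \<le> (\<bar>C\<bar> + 1) * (u powr a * ln u powr b)) sequentially"
    using integers oscillation
    by eventually_elim (auto intro: abs_le_of_integer_bound_and_increment[OF \<open>0 \<le> a\<close> \<open>0 \<le> b\<close>])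
  then have "eventually (\<lambda>t. \<bar>f t\<bar> \<le> (\<bar>C\<bar> + 1) * (t powr a * ln t powr b)) at_top"
    by (rule eventually_at_top_of_unit_intervals)
  then have "f \<in> O(\<lambda>t. t powr a * ln t powr b)"
    by (intro bigoI) (auto elim!: eventually_mono simp: abs_mult)
  moreover have "(\<lambda>t. t powr a * ln t powr b) \<in> o(\<lambda>t. t powr a * ln t powr b')"
    using \<open>b < b'\<close> by real_asymp
  ultimately show ?thesis
    by (rule landau_o.big_small_trans)
qed

theorem proposition2p2:
  fixes M :: "'w measure" and X :: "real \<Rightarrow> 'w \<Rightarrow> real"
    and a b1 b2 :: real
  assumes "prob_space M"
    and meas: "\<And>t. t > 0 \<Longrightarrow> X t \<in> borel_measurable M"
    and "0 < a" "a \<le> 1" "0 \<le> b1" "b1 \<le> b2"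
    and bounds: "\<exists>t0 > 1. 
      (\<forall>t > t0. (\<lambda>\<omega>. SUP u\<in>{t..t+1}. ennreal \<bar>X u \<omega> - X t \<omega>\<bar>) \<in> borel_measurable M) \<and>
      (\<forall>p > 1. \<exists>c > 0.
        (\<forall>t > t0. Lp_norm M p (X t) \<le> ennreal (c * t powr a * ln t powr b1)) \<and>
        (\<forall>s t. t0 \<le> s \<and> s \<le> t - 1 \<longrightarrow>
            Lp_norm M p (\<lambda>\<omega>. X t \<omega> - X s \<omega>) \<le> ennreal (c * (t - s) powr a * ln t powr b2)) \<and>
        (\<forall>t > t0. Lp_norm_enn M p (\<lambda>\<omega>. SUP u\<in>{t..t+1}. ennreal \<bar>X u \<omega> - X t \<omega>\<bar>)
              \<le> ennreal (c * t powr (a / 2))))"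
  shows "\<forall>\<epsilon> > 0. AE \<omega> in M.
           (\<lambda>t. X t \<omega>) \<in> o[at_top](\<lambda>t. t powr a * ln t powr (b1 + \<epsilon>))"
proof (intro allI impI)
  fix \<epsilon> :: real assume "0 < \<epsilon>"
  interpret prob_space M by fact
  from bounds obtain t0 where "1 < t0"
    and sup_measurable: "\<And>t. t > t0 \<Longrightarrow> (\<lambda>\<omega>. SUP u\<in>{t..t+1}. ennreal \<bar>X u \<omega> - X t \<omega>\<bar>) \<in> borel_measurable M"
    and moments: "\<And>p. 1 < p \<Longrightarrow> \<exists>c>0.
        (\<forall>t > t0. Lp_norm M p (X t) \<le> ennreal (c * t powr a * ln t powr b1)) \<and>
        (\<forall>s t. t0 \<le> s \<and> s \<le> t - 1 \<longrightarrow>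
            Lp_norm M p (\<lambda>\<omega>. X t \<omega> - X s \<omega>) \<le> ennreal (c * (t - s) powr a * ln t powr b2)) \<and>
        (\<forall>t > t0. Lp_norm_enn M p (\<lambda>\<omega>. SUP u\<in>{t..t+1}. ennreal \<bar>X u \<omega> - X t \<omega>\<bar>)
              \<le> ennreal (c * t powr (a / 2)))"
    by blast
  have integers: "AE \<omega> in M. eventually (\<lambda>j. \<bar>X (real j) \<omega>\<bar> \<le> (2 powr a + 1) * 3 powr (b1 + \<epsilon> / 2)
      * real j powr a * ln (real j) powr (b1 + \<epsilon> / 2)) sequentially"
    by (rule AE_eventually_growth_at_integers[where ?\<tau> = t0 and ?b2.0 = b2])
      (use assms(1,3,5,6) \<open>0 < \<epsilon>\<close> \<open>1 < t0\<close> in \<open>auto intro: meas dest: moments\<close>)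
  have oscillation: "AE \<omega> in M. eventually (\<lambda>j.
      \<forall>u\<in>{real j..real j + 1}. \<bar>X u \<omega> - X (real j) \<omega>\<bar> \<le> real j powr a) sequentially"
    by (rule AE_eventually_unit_oscillation_le[where ?\<tau> = t0])
      (use \<open>0 < a\<close> \<open>a \<le> 1\<close> sup_measurable in \<open>auto dest: moments\<close>)
  show "AE \<omega> in M. (\<lambda>t. X t \<omega>) \<in> o(\<lambda>t. t powr a * ln t powr (b1 + \<epsilon>))"
    using integers oscillation
  proof eventually_elim
    case (elim \<omega>)
    then show ?case
      using \<open>0 < a\<close> \<open>0 \<le> b1\<close> \<open>0 < \<epsilon>\<close>
      by (intro smallo_of_integer_bound_and_oscillation[where b = "b1 + \<epsilon> / 2"]) auto
  qed
qed

end
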